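(* For all integers $m$ and $n$, \[ F_m \sum_{k = 1}^n ( - 1)^{mk - 1} L_{2mk} = ( - 1)^{mn - 1} F_{mn} L_{mn + m}\,. \]
   Context: $F_i$ and $L_i$ denote the Fibonacci and Lucas numbers, defined for all $i\in\mathbb{Z}$ by $F_i=F_{i-1}+F_{i-2}$, $F_0=0$, $F_1=1$, and $L_i=L_{i-1}+L_{i-2}$, $L_0=2$, $L_1=1$; equivalently $F_{-i}=(-1)^{i-1}F_i$ and $L_{-i}=(-1)^iL_i$. Summation convention for an arbitrary integer upper limit: $\sum_{k=a}^{a-1} f(k)=0$, and for $n<a-1$, $\sum_{k=a}^{n} f(k) = -\sum_{k=n+1}^{a-1} f(k)$. *)

theory Defs
  imports Main
begin

fun fibn :: "nat \<Rightarrow> int" where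
  "fibn 0 = 0" | "fibn (Suc 0) = 1" | "fibn (Suc (Suc n)) = fibn (Suc n) + fibn n"

fun lucn :: "nat \<Rightarrow> int" where
  "lucn 0 = 2" | "lucn (Suc 0) = 1" | "lucn (Suc (Suc n)) = lucn (Suc n) + lucn n"

definition negpow :: "int \<Rightarrow> int" where
  "negpow e = (if even e then 1 else -1)"

definition fibz :: "int \<Rightarrow> int" where
  "fibz i = (if 0 \<le> i then fibn (nat i) else negpow (- i - 1) * fibn (nat (- i)))"

definition lucz :: "int \<Rightarrow> int" where
  "lucz i = (if 0 \<le> i then lucn (nat i) else negpow (- i) * lucn (nat (- i)))"

definition isum :: "int \<Rightarrow> int \<Rightarrow> (int \<Rightarrow> int) \<Rightarrow> int" where
  "isum a n f = (if a - 1 \<le> n then (\<Sum>k\<in>{a..n}. f k) else - (\<Sum>k\<in>{n+1..a-1}. f k))"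

end

theory Submission
  imports Defs
begin

text \<open>The key identity is the product formula F_a L_b = F_(a+b) + (-1)^b F_(a-b), valid for
  all integer indices since both sides satisfy the Fibonacci recurrence in a and agree at
  a = 0, 1. Writing T k = (-1)^(mk-1) F_(mk) L_(mk+m), it gives T k = (-1)^(mk-1) F_(2mk+m) + F_m,
  and, used once more, T k - T (k-1) is exactly F_m times the k-th summand. So the sum
  telescopes to T n - T 0 = T n; the convention for negative upper limits is precisely the
  one under which telescoping holds for every integer n.\<close>

lemma negpow_add: "negpow (x + y) = negpow x * negpow y"
  by (auto simp: negpow_def)

lemma negpow_diff: "negpow (x - y) = negpow x * negpow y"
  by (auto simp: negpow_def)

lemma negpow_mult_self: "negpow x * negpow x = 1"
  by (auto simp: negpow_def)

lemma negpow_0 [simp]: "negpow 0 = 1" and negpow_1 [simp]: "negpow 1 = -1"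
  by (auto simp: negpow_def)

lemma fibonacci_recurrence_unique:
  fixes g h :: "int \<Rightarrow> 'a::ab_group_add"
  assumes g: "\<And>i. g (i + 2) = g (i + 1) + g i"
    and h: "\<And>i. h (i + 2) = h (i + 1) + h i"
    and "g 0 = h 0" "g 1 = h 1"
  shows "g i = h i"
proof -
  define d where "d i = g i - h i" for i
  have d: "d (i + 2) = d (i + 1) + d i" for i
    using g[of i] h[of i] by (simp add: d_def algebra_simps)
  have d01: "d 0 = 0" "d 1 = 0" using assms(3,4) by (simp_all add: d_def)
  have up: "d (int k) = 0 \<and> d (int k + 1) = 0" for k
  proof (induction k)
    case (Suc k)
    have "d (int k + 2) = d (int k + 1) + d (int k)" by (rule d)
    with Suc show ?case by (simp add: add.commute)
  qed (use d01 in simp)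
  have down: "d (- int k) = 0 \<and> d (1 - int k) = 0" for k
  proof (induction k)
    case (Suc k)
    have "d (- int k - 1 + 2) = d (- int k - 1 + 1) + d (- int k - 1)" by (rule d)
    with Suc have "d (- int k - 1) = 0" by (simp add: algebra_simps)
    moreover have "- int (Suc k) = - int k - 1" "1 - int (Suc k) = - int k" by simp_all
    ultimately show ?case using Suc by (simp only:)
  qed (use d01 in simp)
  have "d i = 0"
    using up[of "nat i"] down[of "nat (- i)"] by (cases "i \<ge> 0") simp_all
  then show ?thesis by (simp add: d_def)
qed

text \<open>The hypothesis on \<open>f 1\<close> is the recurrence at \<open>i = -1\<close>, the only place where the
  two halves of \<open>g\<close> meet.\<close>
lemma signed_extension_recurrence:
  fixes f :: "nat \<Rightarrow> int" and g :: "int \<Rightarrow> int"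
  assumes f: "\<And>k. f (Suc (Suc k)) = f (Suc k) + f k"
    and pos: "\<And>k. g (int k) = f k"
    and neg: "\<And>k. g (- int k) = negpow (s + int k) * f k"
    and at_minus_one: "f 1 = f 0 + negpow (s + 1) * f 1"
  shows "g (i + 2) = g (i + 1) + g i"
proof -
  consider k where "i = int k" | "i = -1" | k where "i = - int (Suc (Suc k))"
  proof (cases "i \<ge> -1")
    case True
    then show thesis
      using that(1)[of "nat i"] that(2) by (cases "i = -1") simp_all
  next
    case False
    then show thesis
      using that(3)[of "nat (- i - 2)"] by simp
  qed
  then show ?thesis
  proof cases
    case (1 k)
    have "g (int (Suc (Suc k))) = g (int (Suc k)) + g (int k)"
      using f[of k] by (simp only: pos)
    then show ?thesis
      unfolding 1 by (simp add: add.commute)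
  next
    case 2
    then show ?thesis
      using pos[of 1] pos[of 0] neg[of 1] at_minus_one by simp
  next
    case (3 k)
    have shifted: "i + 2 = - int k" "i + 1 = - int (Suc k)" using 3 by simp_all
    have "negpow (s + int (Suc k)) = - negpow (s + int k)"
      "negpow (s + int (Suc (Suc k))) = negpow (s + int k)"
      by (simp_all add: negpow_def)
    then have "g (- int k) = g (- int (Suc k)) + g (- int (Suc (Suc k)))"
      unfolding neg using f[of k] by (simp add: algebra_simps)
    then show ?thesis
      unfolding shifted by (simp only: 3)
  qed
qed

lemma fibz_of_nat [simp]: "fibz (int k) = fibn k"
  by (simp add: fibz_def)

lemma lucz_of_nat [simp]: "lucz (int k) = lucn k"
  by (simp add: lucz_def)

lemma fibz_neg_of_nat: "fibz (- int k) = negpow (int k - 1) * fibn k"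
  by (cases k) (auto simp: fibz_def negpow_def nat_add_distrib)

lemma lucz_neg_of_nat: "lucz (- int k) = negpow (int k) * lucn k"
  by (cases k) (auto simp: lucz_def negpow_def nat_add_distrib)

lemma fibz_rec: "fibz (i + 2) = fibz (i + 1) + fibz i"
  by (rule signed_extension_recurrence[where f = fibn and s = "-1"])
    (simp_all add: fibz_neg_of_nat)

lemma lucz_rec: "lucz (i + 2) = lucz (i + 1) + lucz i"
  by (rule signed_extension_recurrence[where f = lucn and s = 0])
    (simp_all add: lucz_neg_of_nat)

lemma fibz_uminus: "fibz (- i) = - negpow i * fibz i"
  by (auto simp: fibz_def negpow_def)

lemma lucz_eq_fibz: "lucz i = fibz (i + 1) + fibz (i - 1)"
proof (rule fibonacci_recurrence_unique[of lucz])
  fix i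
  show "lucz (i + 2) = lucz (i + 1) + lucz i" by (rule lucz_rec)
  show "fibz (i + 2 + 1) + fibz (i + 2 - 1)
      = fibz (i + 1 + 1) + fibz (i + 1 - 1) + (fibz (i + 1) + fibz (i - 1))"
    using fibz_rec[of "i + 1"] fibz_rec[of "i - 1"] by (simp add: algebra_simps)
qed (simp_all add: fibz_def lucz_def negpow_def numeral_2_eq_2)

lemma fibz_mult_lucz: "fibz a * lucz b = fibz (a + b) + negpow b * fibz (a - b)"
proof (rule fibonacci_recurrence_unique[of "\<lambda>a. fibz a * lucz b"])
  fix i
  show "fibz (i + 2) * lucz b = fibz (i + 1) * lucz b + fibz i * lucz b"
    using fibz_rec[of i] by (simp add: algebra_simps)
  show "fibz (i + 2 + b) + negpow b * fibz (i + 2 - b)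
      = fibz (i + 1 + b) + negpow b * fibz (i + 1 - b) + (fibz (i + b) + negpow b * fibz (i - b))"
    using fibz_rec[of "i + b"] fibz_rec[of "i - b"] by (simp add: algebra_simps)
next
  show "fibz 0 * lucz b = fibz (0 + b) + negpow b * fibz (0 - b)"
    using fibz_uminus[of b] negpow_mult_self[of b] by (simp add: fibz_def)
next
  have "fibz (1 - b) = negpow b * fibz (b - 1)"
    using fibz_uminus[of "b - 1"] by (simp add: negpow_diff)
  then show "fibz 1 * lucz b = fibz (1 + b) + negpow b * fibz (1 - b)"
    using negpow_mult_self[of b]
    by (simp add: lucz_eq_fibz fibz_def add.commute mult.assoc[symmetric])
qed

lemma fibz_mult_lucz_diff: "fibz b * lucz a = fibz (a + b) - negpow b * fibz (a - b)"
proof -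
  have "negpow a * fibz (b - a) = - negpow b * fibz (a - b)"
    using fibz_uminus[of "a - b"] negpow_mult_self[of a]
    by (simp add: negpow_diff algebra_simps)
  then show ?thesis
    using fibz_mult_lucz[of b a] by (simp add: add.commute)
qed

lemma signed_fibz_mult_lucz:
  "negpow (x - 1) * fibz x * lucz (x + m) = negpow (x - 1) * fibz (2 * x + m) + fibz m"
proof -
  have "x + (x + m) = 2 * x + m" "x - (x + m) = - m" by simp_all
  then have "fibz x * lucz (x + m) = fibz (2 * x + m) + negpow (x + m) * fibz (- m)"
    using fibz_mult_lucz[of x "x + m"] by simp
  also have "negpow (x + m) * fibz (- m) = - negpow x * fibz m"
    using negpow_mult_self[of m] by (simp add: fibz_uminus negpow_add algebra_simps)
  finally have product: "fibz x * lucz (x + m) = fibz (2 * x + m) - negpow x * fibz m"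
    by simp
  have sign: "negpow (x - 1) * negpow x = -1"
    using negpow_mult_self[of x] by (simp add: negpow_diff)
  have "negpow (x - 1) * fibz x * lucz (x + m)
      = negpow (x - 1) * fibz (2 * x + m) - (negpow (x - 1) * negpow x) * fibz m"
    by (simp add: mult.assoc product right_diff_distrib)
  then show ?thesis
    unfolding sign by simp
qed

lemma fibz_mult_summand_telescopes:
  "fibz m * (negpow (m * k - 1) * lucz (2 * m * k))
   = negpow (m * k - 1) * fibz (m * k) * lucz (m * k + m)
     - negpow (m * (k - 1) - 1) * fibz (m * (k - 1)) * lucz (m * (k - 1) + m)"
proof -
  have shift: "m * (k - 1) - 1 = (m * k - 1) - m" "2 * (m * (k - 1)) + m = 2 * m * k - m"
    by (simp_all add: algebra_simps)
  have "negpow (m * (k - 1) - 1) * fibz (m * (k - 1)) * lucz (m * (k - 1) + m)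
      = negpow (m * k - 1) * negpow m * fibz (2 * m * k - m) + fibz m"
    using signed_fibz_mult_lucz[of "m * (k - 1)" m] negpow_diff[of "m * k - 1" m]
    unfolding shift by simp
  moreover have "negpow (m * k - 1) * fibz (m * k) * lucz (m * k + m)
      = negpow (m * k - 1) * fibz (2 * m * k + m) + fibz m"
    using signed_fibz_mult_lucz[of "m * k" m] by (simp add: mult.assoc)
  moreover have "negpow (m * k - 1) * (fibz m * lucz (2 * m * k))
      = negpow (m * k - 1) * (fibz (2 * m * k + m) - negpow m * fibz (2 * m * k - m))"
    by (simp add: fibz_mult_lucz_diff)
  ultimately show ?thesis
    by (simp add: right_diff_distrib mult.left_commute)
qed

lemma isum_last: "isum a n f = isum a (n - 1) f + f n"
proof -
  consider "a \<le> n" | "n = a - 1" | "n < a - 1" by linarith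
  then show ?thesis
  proof cases
    case 1
    then have "{a..n} = insert n {a..n - 1}" by auto
    with 1 show ?thesis by (simp add: isum_def)
  next
    case 3
    then have "{n..a - 1} = insert n {n + 1..a - 1}" by auto
    with 3 show ?thesis by (simp add: isum_def)
  qed (simp add: isum_def)
qed

lemma isum_telescope: "isum a n (\<lambda>k. T k - T (k - 1)) = T n - T (a - 1)"
proof (induction n rule: int_induct[where k = "a - 1"])
  case base
  then show ?case by (simp add: isum_def)
next
  case (step1 i)
  then show ?case using isum_last[of a "i + 1"] by simp
next
  case (step2 i)
  then show ?case using isum_last[of a i] by simp
qed

lemma isum_mult_left: "c * isum a n f = isum a n (\<lambda>k. c * f k)"
  by (simp add: isum_def sum_distrib_left)

theorem lemma3:
  fixes m n :: int
  shows "fibz m * isum 1 n (\<lambda>k. negpow (m * k - 1) * lucz (2 * m * k))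
           = negpow (m * n - 1) * fibz (m * n) * lucz (m * n + m)"
proof -
  define T where "T k = negpow (m * k - 1) * fibz (m * k) * lucz (m * k + m)" for k
  have "fibz m * isum 1 n (\<lambda>k. negpow (m * k - 1) * lucz (2 * m * k))
      = isum 1 n (\<lambda>k. T k - T (k - 1))"
    unfolding isum_mult_left T_def fibz_mult_summand_telescopes ..
  also have "\<dots> = T n - T 0"
    by (simp add: isum_telescope)
  also have "T 0 = 0"
    by (simp add: T_def fibz_def)
  finally show ?thesis
    by (simp add: T_def)
qed

end
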